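(* Let $R$ be a commutative ring with $R=2R$, $I$ an ideal of $R$ and $n\ge2$. Let $P=R^{2n}$ with the form $\langle p,q\rangle=p^t\widetilde\psi_nq$, and $Q=R^2\oplus P=R^{2n+2}$ with the form $\langle x,y\rangle=x^t\widetilde\psi_{n+1}y$ (the induced form of $\mathbb{H}(R)\oplus P$). Then, as subgroups of $\mathrm{GL}_{2n+2}(R)$, $$\mathrm{ETrans}_{\mathrm{O}}(Q,IQ,\langle\,,\rangle_{\widetilde\psi_{n+1}})=\mathrm{EO}_{2n+2}(R,I).$$
   Context: $\widetilde\psi_m=\sum_{i=1}^m(e_{2i-1,2i}+e_{2i,2i-1})$. Let $\sigma$ be the permutation of $\{1,\dots,2m\}$ with $\sigma(2i)=2i-1$, $\sigma(2i-1)=2i$; for $z\in R$, $1\le i\ne j\le 2m$, $i\ne\sigma(j)$, $oe_{ij}(z)=1_{2m}+ze_{ij}-ze_{\sigma(j)\sigma(i)}$; $\mathrm{EO}_{2m}(R)$ is generated by all $oe_{ij}(z)$, $\mathrm{EO}_{2m}(I)$ by those with $z\in I$, and $\mathrm{EO}_{2m}(R,I)$ is the normal closure of $\mathrm{EO}_{2m}(I)$ in $\mathrm{EO}_{2m}(R)$. For a symmetric invertible $2n\times 2n$ matrix $\varphi$ and $q\in R^{2n}$ with $q^t\varphi q=0$, define the $(2n+2)\times(2n+2)$ block matrices (blocks of sizes $1,1,2n$) $\rho_\varphi(q)=\begin{pmatrix}1&0&0\\0&1&q^t\varphi\\-q&0&I_{2n}\end{pmatrix}$, $\mu_\varphi(q)=\begin{pmatrix}1&0&q^t\varphi\\0&1&0\\0&-q&I_{2n}\end{pmatrix}$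 (the elementary orthogonal transvections $(a,b,p)\mapsto(a,b+\langle p,q\rangle,p-aq)$ and $(a,b,p)\mapsto(a+\langle p,q\rangle,b,p-bq)$ of $Q=R^2\oplus R^{2n}$ with form $\widetilde\psi_1\perp\varphi$). $\mathrm{ETrans}_{\mathrm{O}}(Q,\langle\,,\rangle_{\widetilde\psi_1\perp\varphi})$ is generated by all $\rho_\varphi(q),\mu_\varphi(q)$; $\mathrm{ETrans}_{\mathrm{O}}(IQ,\ldots)$ by those with $q\in I^{2n}$; and $\mathrm{ETrans}_{\mathrm{O}}(Q,IQ,\langle\,,\rangle_{\widetilde\psi_1\perp\varphi})$ is the normal closure of the latter in the former. Here $\varphi=\widetilde\psi_n$, so $\widetilde\psi_1\perp\varphi=\widetilde\psi_{n+1}$. *)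

theory Defs
  imports Main
begin

text \<open>Square N x N matrices over a commutative ring are represented as functions
  nat => nat => 'a, with indices 0..N-1 (0-based) and all entries outside the
  N x N range equal to 0.\<close>

type_synonym 'a sqmat = "nat \<Rightarrow> nat \<Rightarrow> 'a"

definition mat_ok :: "nat \<Rightarrow> 'a::zero sqmat \<Rightarrow> bool" where
  "mat_ok N A \<longleftrightarrow> (\<forall>i j. (N \<le> i \<or> N \<le> j) \<longrightarrow> A i j = 0)"

definition one_mat :: "nat \<Rightarrow> 'a::comm_ring_1 sqmat" where
  "one_mat N = (\<lambda>i j. if i < N \<and> j < N \<and> i = j then 1 else 0)"

definition mmult :: "nat \<Rightarrow> 'a::comm_ring_1 sqmat \<Rightarrow> 'a sqmat \<Rightarrow> 'a sqmat" where
  "mmult N A B = (\<lambda>i j. if i < N \<and> j < N then (\<Sum>k<N. A i k * B k j) else 0)"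

definition is_inv :: "nat \<Rightarrow> 'a::comm_ring_1 sqmat \<Rightarrow> 'a sqmat \<Rightarrow> bool" where
  "is_inv N A B \<longleftrightarrow> mat_ok N B \<and> mmult N A B = one_mat N \<and> mmult N B A = one_mat N"

inductive_set gen_group :: "nat \<Rightarrow> 'a::comm_ring_1 sqmat set \<Rightarrow> 'a sqmat set"
  for N :: nat and S :: "'a sqmat set" where
  gen_one: "one_mat N \<in> gen_group N S"
| gen_base: "A \<in> S \<Longrightarrow> A \<in> gen_group N S"
| gen_mult: "A \<in> gen_group N S \<Longrightarrow> B \<in> gen_group N S \<Longrightarrow> mmult N A B \<in> gen_group N S"
| gen_inv: "A \<in> gen_group N S \<Longrightarrow> is_inv N A B \<Longrightarrow> B \<in> gen_group N S"

definition normal_closure :: "nat \<Rightarrow> 'a::comm_ring_1 sqmat set \<Rightarrow> 'a sqmat set \<Rightarrow> 'a sqmat set" where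
  "normal_closure N G H = gen_group N
     {mmult N (mmult N g h) g' | g h g'. g \<in> G \<and> h \<in> H \<and> is_inv N g g'}"

definition is_ideal :: "'a::comm_ring_1 set \<Rightarrow> bool" where
  "is_ideal I \<longleftrightarrow> 0 \<in> I \<and> (\<forall>x\<in>I. \<forall>y\<in>I. x + y \<in> I) \<and> (\<forall>r x. x \<in> I \<longrightarrow> r * x \<in> I)"

definition emat :: "nat \<Rightarrow> nat \<Rightarrow> 'a::comm_ring_1 sqmat" where
  "emat i j = (\<lambda>k l. if k = i \<and> l = j then 1 else 0)"

text \<open>The permutation sigma, 0-based: swaps 2k and 2k+1 (corresponds to the
  paper's pairing of 2i-1 and 2i in 1-based indexing).\<close>
definition sigma :: "nat \<Rightarrow> nat" where
  "sigma i = (if even i then i + 1 else i - 1)"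

definition psi_t :: "nat \<Rightarrow> 'a::comm_ring_1 sqmat" where
  "psi_t m = (\<lambda>i j. if i < 2*m \<and> j < 2*m \<and> j = sigma i then 1 else 0)"

definition oe :: "nat \<Rightarrow> nat \<Rightarrow> nat \<Rightarrow> 'a::comm_ring_1 \<Rightarrow> 'a sqmat" where
  "oe m i j z = (\<lambda>k l. one_mat (2*m) k l + z * emat i j k l - z * emat (sigma j) (sigma i) k l)"

definition oe_gens :: "nat \<Rightarrow> 'a::comm_ring_1 set \<Rightarrow> 'a sqmat set" where
  "oe_gens m J = {oe m i j z | i j z. i < 2*m \<and> j < 2*m \<and> i \<noteq> j \<and> i \<noteq> sigma j \<and> z \<in> J}"

definition EO :: "nat \<Rightarrow> 'a::comm_ring_1 sqmat set" where
  "EO m = gen_group (2*m) (oe_gens m UNIV)"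

definition EO_ideal :: "nat \<Rightarrow> 'a::comm_ring_1 set \<Rightarrow> 'a sqmat set" where
  "EO_ideal m J = gen_group (2*m) (oe_gens m J)"

definition EO_rel :: "nat \<Rightarrow> 'a::comm_ring_1 set \<Rightarrow> 'a sqmat set" where
  "EO_rel m J = normal_closure (2*m) (EO m) (EO_ideal m J)"

definition qtphi :: "nat \<Rightarrow> 'a::comm_ring_1 sqmat \<Rightarrow> (nat \<Rightarrow> 'a) \<Rightarrow> nat \<Rightarrow> 'a" where
  "qtphi n phi q l = (\<Sum>k<2*n. q k * phi k l)"

definition isotropic :: "nat \<Rightarrow> 'a::comm_ring_1 sqmat \<Rightarrow> (nat \<Rightarrow> 'a) \<Rightarrow> bool" where
  "isotropic n phi q \<longleftrightarrow> (\<Sum>l<2*n. qtphi n phi q l * q l) = 0"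

text \<open>rho_phi(q) and mu_phi(q) as (2n+2) x (2n+2) matrices with blocks of sizes 1,1,2n;
  index 0 is the first block, index 1 the second, indices 2..2n+1 the third.\<close>
definition rho :: "nat \<Rightarrow> 'a::comm_ring_1 sqmat \<Rightarrow> (nat \<Rightarrow> 'a) \<Rightarrow> 'a sqmat" where
  "rho n phi q = (\<lambda>i j.
     if i < 2*n+2 \<and> j < 2*n+2 then
       (if i = j then 1
        else if i = 1 \<and> 2 \<le> j then qtphi n phi q (j - 2)
        else if 2 \<le> i \<and> j = 0 then - q (i - 2)
        else 0)
     else 0)"

definition mu :: "nat \<Rightarrow> 'a::comm_ring_1 sqmat \<Rightarrow> (nat \<Rightarrow> 'a) \<Rightarrow> 'a sqmat" where
  "mu n phi q = (\<lambda>i j.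
     if i < 2*n+2 \<and> j < 2*n+2 then
       (if i = j then 1
        else if i = 0 \<and> 2 \<le> j then qtphi n phi q (j - 2)
        else if 2 \<le> i \<and> j = 1 then - q (i - 2)
        else 0)
     else 0)"

definition etrans_gens :: "nat \<Rightarrow> 'a::comm_ring_1 sqmat \<Rightarrow> 'a set \<Rightarrow> 'a sqmat set" where
  "etrans_gens n phi J = {M | M q. (\<forall>k<2*n. q k \<in> J) \<and> isotropic n phi q \<and>
                                   (M = rho n phi q \<or> M = mu n phi q)}"

definition ETrans :: "nat \<Rightarrow> 'a::comm_ring_1 sqmat \<Rightarrow> 'a sqmat set" where
  "ETrans n phi = gen_group (2*n+2) (etrans_gens n phi UNIV)"

definition ETrans_ideal :: "nat \<Rightarrow> 'a::comm_ring_1 sqmat \<Rightarrow> 'a set \<Rightarrow> 'a sqmat set" where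
  "ETrans_ideal n phi J = gen_group (2*n+2) (etrans_gens n phi J)"

definition ETrans_rel :: "nat \<Rightarrow> 'a::comm_ring_1 sqmat \<Rightarrow> 'a set \<Rightarrow> 'a sqmat set" where
  "ETrans_rel n phi J = normal_closure (2*n+2) (ETrans n phi) (ETrans_ideal n phi J)"

end

theory Submission
  imports Defs
begin

text \<open>
  With respect to the hyperbolic pair e_0, e_1, rho(q) and mu(q) belong to families E_a(q, c)
  (a = 0, 1) that multiply like a Heisenberg group: E_a(q, c) E_a(q', c') = E_a(q + q', c + c' -
  q^t psi q').  Hence E_a(q, 0) is the product of the E_a of the coordinate vectors of q, each of
  which is an elementary orthogonal matrix oe_{k+2, a}, up to the correction c = -(1/2) q^t psi q;
  this vanishes for isotropic q because 2 is invertible.  Conversely every oe_{ij} with i or j in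
  {0, 1} is such a coordinate transvection, and for i, j \<ge> 2 the commutator formula
  oe_{ij}(z) = [oe_{i0}(1), oe_{0j}(z)] applies.  So ETrans(Q) = EO_{2n+2}(R) and
  ETrans(IQ) \<subseteq> EO_{2n+2}(I) \<subseteq> ETrans(Q, IQ), which forces the normal closures to agree.
\<close>

lemma sigma_sigma [simp]: "sigma (sigma i) = i"
  by (simp add: sigma_def)

lemma sigma_neq [simp]: "sigma i \<noteq> i"
  by (cases "even i") (auto simp: sigma_def elim!: oddE)

lemma sigma_eq_iff: "sigma i = j \<longleftrightarrow> i = sigma j"
  by (auto simp: sigma_def)

lemma eq_sigma_iff: "i = sigma j \<longleftrightarrow> j = sigma i"
  by (auto simp: sigma_def)

lemma sigma_less_iff [simp]: "sigma i < 2*m \<longleftrightarrow> i < 2*m"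
  by (auto simp: sigma_def elim!: evenE oddE)

lemma sigma_ge_iff [simp]: "2*m \<le> sigma i \<longleftrightarrow> 2*m \<le> i"
  using sigma_less_iff[of i m] by linarith

lemma sigma_ge_2: "2 \<le> i \<Longrightarrow> 2 \<le> sigma i"
  by (auto simp: sigma_def elim!: oddE)

lemma sigma_Suc_Suc [simp]: "sigma (Suc (Suc i)) = Suc (Suc (sigma i))"
  by (simp add: sigma_def)

lemma sigma_0 [simp]: "sigma 0 = 1"
  and sigma_1 [simp]: "sigma 1 = 0" "sigma (Suc 0) = 0"
  by (simp_all add: sigma_def)

lemma if_one_zero_mult [simp]: "(if P then (1::'a::comm_ring_1) else 0) * x = (if P then x else 0)"
  by simp

lemma mult_if_one_zero [simp]: "x * (if P then (1::'a::comm_ring_1) else 0) = (if P then x else 0)"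
  by simp

lemma if_neg_zero [simp]: "(if P then - z else 0) = - (if P then z else (0::'a::ab_group_add))"
  by simp

lemma sum_lessThan_mult_delta:
  "(\<Sum>k<(N::nat). f k * (if k = p then (x::'a::comm_ring_1) else 0)) = (if p < N then f p * x else 0)"
  by (simp add: if_distrib[of "(*) _"] cong: if_cong)

lemma sum_lessThan_Suc_Suc: "(\<Sum>k<Suc (Suc m). f k) = f 0 + f 1 + (\<Sum>l<m. f (Suc (Suc l)))"
  by (induction m) (auto simp: add.assoc)

lemma nat_cases_0_1_Suc_Suc:
  obtains "i = 0" | "i = 1" | k where "i = Suc (Suc k)"
  by (metis One_nat_def not0_implies_Suc)

lemma index_cases5:
  obtains "x = a" | "x = b" | "x = c" | "x = d" | "x \<noteq> a \<and> x \<noteq> b \<and> x \<noteq> c \<and> x \<noteq> d"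
  by blast

lemma mat_ok_mmult [simp]: "mat_ok N (mmult N A B)"
  by (simp add: mat_ok_def mmult_def)

lemma mat_ok_one_mat [simp]: "mat_ok N (one_mat N)"
  by (simp add: mat_ok_def one_mat_def)

lemma mmult_assoc: "mmult N (mmult N A B) C = mmult N A (mmult N B C)"
proof (intro ext)
  fix i j
  show "mmult N (mmult N A B) C i j = mmult N A (mmult N B C) i j"
  proof (cases "i < N \<and> j < N")
    case True
    have "mmult N (mmult N A B) C i j = (\<Sum>x<N. \<Sum>k<N. A i k * B k x * C x j)"
      using True by (simp add: mmult_def sum_distrib_right)
    also have "\<dots> = (\<Sum>k<N. \<Sum>x<N. A i k * B k x * C x j)"
      by (rule sum.swap)
    also have "\<dots> = mmult N A (mmult N B C) i j"
      using True by (simp add: mmult_def sum_distrib_left mult.assoc)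
    finally show ?thesis .
  qed (auto simp: mmult_def)
qed

lemma mmult_one_left: "mat_ok N A \<Longrightarrow> mmult N (one_mat N) A = A"
  by (intro ext) (auto simp: mmult_def one_mat_def mat_ok_def)

lemma mmult_one_right: "mat_ok N A \<Longrightarrow> mmult N A (one_mat N) = A"
  by (intro ext) (auto simp: mmult_def one_mat_def mat_ok_def)

lemma is_inv_sym: "mat_ok N A \<Longrightarrow> is_inv N A B \<Longrightarrow> is_inv N B A"
  by (simp add: is_inv_def)

lemma is_inv_one_mat: "is_inv N (one_mat N) (one_mat N)"
  by (simp add: is_inv_def mmult_one_left)

lemma is_inv_mmult:
  assumes "mat_ok N A" "mat_ok N B" "is_inv N A A'" "is_inv N B B'"
  shows "is_inv N (mmult N A B) (mmult N B' A')"
proof -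
  have "mat_ok N A'" "mat_ok N B'"
    using assms by (auto simp: is_inv_def)
  then have "mmult N A (mmult N (mmult N B B') A') = one_mat N"
    and "mmult N B' (mmult N (mmult N A' A) B) = one_mat N"
    using assms by (simp_all add: is_inv_def mmult_one_left)
  then show ?thesis
    by (simp add: is_inv_def mmult_assoc)
qed

definition GL :: "nat \<Rightarrow> 'a::comm_ring_1 sqmat set" where
  "GL N = {A. mat_ok N A \<and> (\<exists>B. is_inv N A B)}"

definition is_subgroup :: "nat \<Rightarrow> 'a::comm_ring_1 sqmat set \<Rightarrow> bool" where
  "is_subgroup N H \<longleftrightarrow> one_mat N \<in> H \<and> (\<forall>A\<in>H. \<forall>B\<in>H. mmult N A B \<in> H)
     \<and> (\<forall>A\<in>H. \<forall>B. is_inv N A B \<longrightarrow> B \<in> H)"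

lemma is_subgroup_GL: "is_subgroup N (GL N)"
proof -
  have "mmult N A B \<in> GL N" if "A \<in> GL N" "B \<in> GL N" for A B :: "'a sqmat"
    using that is_inv_mmult[of N A B] by (auto simp: GL_def)
  moreover have "B \<in> GL N" if "A \<in> GL N" "is_inv N A B" for A B :: "'a sqmat"
    using that is_inv_sym[of N A B] by (auto simp: GL_def is_inv_def)
  moreover have "one_mat N \<in> GL N"
    using is_inv_one_mat by (auto simp: GL_def)
  ultimately show ?thesis
    by (auto simp: is_subgroup_def)
qed

lemma is_subgroup_gen_group: "is_subgroup N (gen_group N S)"
  by (auto simp: is_subgroup_def intro: gen_group.intros)

lemma gen_group_least: "is_subgroup N H \<Longrightarrow> S \<subseteq> H \<Longrightarrow> gen_group N S \<subseteq> H"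
proof
  fix A assume H: "is_subgroup N H" "S \<subseteq> H" and "A \<in> gen_group N S"
  from this(3) show "A \<in> H"
    by induction (use H in \<open>auto simp: is_subgroup_def\<close>)
qed

lemma normal_closure_subset_GL:
  assumes "G \<subseteq> GL N" "K \<subseteq> GL N"
  shows "normal_closure N G K \<subseteq> GL N"
  unfolding normal_closure_def
proof (rule gen_group_least[OF is_subgroup_GL], safe)
  fix g h g' assume "g \<in> G" "h \<in> K" "is_inv N g g'"
  then show "mmult N (mmult N g h) g' \<in> GL N"
    using assms is_subgroup_GL[of N] unfolding is_subgroup_def by blast
qed

lemma subset_normal_closure:
  assumes "one_mat N \<in> G" "K \<subseteq> GL N"
  shows "K \<subseteq> normal_closure N G K"
proof
  fix k assume "k \<in> K"
  moreover from this have "k = mmult N (mmult N (one_mat N) k) (one_mat N)"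
    using assms(2) by (auto simp: GL_def mmult_one_left mmult_one_right)
  ultimately show "k \<in> normal_closure N G K"
    unfolding normal_closure_def using assms(1) is_inv_one_mat
    by (intro gen_base) blast
qed

lemma mmult_insert_inverse:
  assumes "mmult N c c' = one_mat N" "mat_ok N b"
  shows "mmult N (mmult N g (mmult N a b)) g'
    = mmult N (mmult N (mmult N g a) c) (mmult N (mmult N c' b) g')"
proof -
  have "mmult N (mmult N c c') (mmult N b g') = mmult N b g'"
    using assms by (simp add: mmult_one_left)
  then show ?thesis
    by (simp only: mmult_assoc)
qed
lemma is_inv_conj:
  assumes "is_inv N g g'" "is_inv N A B" "mat_ok N g" "mat_ok N A"
  shows "is_inv N (mmult N (mmult N g A) g') (mmult N (mmult N g B) g')"
proof -
  have "is_inv N (mmult N (mmult N g A) g') (mmult N g (mmult N B g'))"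
    using assms is_inv_mmult is_inv_sym by (metis is_inv_def mat_ok_mmult)
  then show ?thesis
    by (simp add: mmult_assoc)
qed

lemma normal_closure_conj:
  assumes G: "is_subgroup N G" "G \<subseteq> GL N" and K: "K \<subseteq> GL N"
    and h: "h \<in> normal_closure N G K" and g: "g \<in> G" "is_inv N g g'"
  shows "mmult N (mmult N g h) g' \<in> normal_closure N G K"
proof -
  have mat_ok_G: "mat_ok N x" if "x \<in> G" for x
    using that G(2) by (auto simp: GL_def)
  have mat_ok_closure: "mat_ok N x" if "x \<in> normal_closure N G K" for x
    using that normal_closure_subset_GL[OF G(2) K] by (auto simp: GL_def)
  from h g show ?thesis
    unfolding normal_closure_def[of N G K]
  proof (induction arbitrary: g g')
    case gen_one
    then have "mmult N (mmult N g (one_mat N)) g' = one_mat N"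
      using mat_ok_G by (simp add: is_inv_def mmult_one_right)
    then show ?case
      by (simp add: gen_group.gen_one)
  next
    case (gen_base A)
    then obtain x k x' where A: "A = mmult N (mmult N x k) x'" "x \<in> G" "k \<in> K" "is_inv N x x'"
      by blast
    have "mmult N (mmult N g A) g' = mmult N (mmult N (mmult N g x) k) (mmult N x' g')"
      by (simp add: A mmult_assoc)
    moreover have "is_inv N (mmult N g x) (mmult N x' g')"
      using is_inv_mmult gen_base.prems A mat_ok_G by blast
    moreover have "mmult N g x \<in> G"
      using G(1) gen_base.prems A(2) by (auto simp: is_subgroup_def)
    ultimately show ?case
      using A(3) by (intro gen_group.gen_base) blast
  next
    case (gen_mult A B)
    have "mmult N (mmult N g (mmult N A B)) g'
        = mmult N (mmult N (mmult N g A) g') (mmult N (mmult N g B) g')"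
      using gen_mult mat_ok_closure unfolding normal_closure_def
      by (intro mmult_insert_inverse) (auto simp: is_inv_def)
    then show ?case
      using gen_mult by (simp add: gen_group.gen_mult)
  next
    case (gen_inv A B)
    have "mat_ok N A" "mat_ok N g"
      using gen_inv mat_ok_closure mat_ok_G unfolding normal_closure_def by blast+
    then have "is_inv N (mmult N (mmult N g A) g') (mmult N (mmult N g B) g')"
      using gen_inv.hyps(2) gen_inv.prems(2) by (intro is_inv_conj)
    then show ?case
      using gen_inv.IH[OF gen_inv.prems] by (rule gen_group.gen_inv[rotated])
  qed
qed

lemma normal_closure_subsetI:
  assumes "is_subgroup N G" "G \<subseteq> GL N" "K' \<subseteq> GL N" "K \<subseteq> normal_closure N G K'"
  shows "normal_closure N G K \<subseteq> normal_closure N G K'"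
  unfolding normal_closure_def[of N G K]
proof (rule gen_group_least)
  show "is_subgroup N (normal_closure N G K')"
    unfolding normal_closure_def by (rule is_subgroup_gen_group)
qed (use assms normal_closure_conj in blast)

section \<open>Elementary orthogonal matrices\<close>

lemma oe_apply:
  "oe m i j z r s = (if r < 2*m \<and> s < 2*m \<and> r = s then 1 else 0)
     + (if r = i \<and> s = j then z else 0) - (if r = sigma j \<and> s = sigma i then z else 0)"
  unfolding oe_def one_mat_def emat_def by (simp only: mult_if_one_zero)

lemma mat_ok_oe: "i < 2*m \<Longrightarrow> j < 2*m \<Longrightarrow> mat_ok (2*m) (oe m i j z)"
  by (auto simp: mat_ok_def oe_apply)

lemma mmult_oe_right:
  assumes "i < 2*m" "j < 2*m"
  shows "mmult (2*m) B (oe m i j z) r s = (if r < 2*m \<and> s < 2*m then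
    B r s + (if s = j then z * B r i else 0) - (if s = sigma i then z * B r (sigma j) else 0) else 0)"
proof (cases "r < 2*m \<and> s < 2*m")
  case True
  have "mmult (2*m) B (oe m i j z) r s
      = (\<Sum>k<2*m. (if k = s then B r k else 0) + (if k = i then (if s = j then z * B r k else 0) else 0)
          - (if k = sigma j then (if s = sigma i then z * B r k else 0) else 0))"
    using True unfolding mmult_def oe_apply
    by (auto intro!: sum.cong simp: ring_distribs)
  also have "\<dots> = B r s + (if s = j then z * B r i else 0) - (if s = sigma i then z * B r (sigma j) else 0)"
    using True assms by (simp add: sum.distrib sum_subtractf)
  finally show ?thesis
    using True by simp
next
  case False
  show ?thesis
    unfolding mmult_def if_not_P[OF False] ..
qed

lemma oe_add:
  assumes "i < 2*m" "j < 2*m" "i \<noteq> j" "i \<noteq> sigma j"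
  shows "mmult (2*m) (oe m i j z) (oe m i j w) = oe m i j (z + w)"
proof (intro ext)
  fix r s
  have "j \<noteq> sigma i" "sigma i \<noteq> sigma j" "i \<noteq> sigma i"
    using assms(3,4) by (metis sigma_eq_iff, metis sigma_sigma, metis sigma_neq)
  moreover have "sigma i < 2*m" "sigma j < 2*m"
    using assms(1,2) by simp_all
  ultimately show "mmult (2*m) (oe m i j z) (oe m i j w) r s = oe m i j (z + w) r s"
    using assms unfolding mmult_oe_right[OF assms(1,2)] oe_apply
    by (cases "r = i"; cases "r = sigma j"; cases "s = j"; cases "s = sigma i") (simp_all add: algebra_simps)
qed

lemma oe_zero: "oe m i j 0 = one_mat (2*m)"
  by (simp add: oe_def)

lemma is_inv_oe:
  assumes "i < 2*m" "j < 2*m" "i \<noteq> j" "i \<noteq> sigma j"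
  shows "is_inv (2*m) (oe m i j z) (oe m i j (-z))"
  using assms oe_add[OF assms, of z "-z"] oe_add[OF assms, of "-z" z]
  by (simp add: is_inv_def mat_ok_oe oe_zero)

lemma oe_swap: "oe m i j z = oe m (sigma j) (sigma i) (-z)"
  by (simp add: oe_def algebra_simps)

lemma oe_gens_subset_GL: "oe_gens m J \<subseteq> GL (2*m)"
proof
  fix M assume "M \<in> oe_gens m J"
  then obtain i j z where "M = oe m i j z" "i < 2*m" "j < 2*m" "i \<noteq> j" "i \<noteq> sigma j"
    by (auto simp: oe_gens_def)
  then show "M \<in> GL (2*m)"
    unfolding GL_def using mat_ok_oe is_inv_oe by blast
qed

lemma double_add_one: "2 * (n + 1) = 2 * n + (2::nat)"
  by simp

lemma EO_Suc: "EO (n+1) = gen_group (2*n+2) (oe_gens (n+1) UNIV)"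
  unfolding EO_def double_add_one ..

lemma EO_ideal_Suc: "EO_ideal (n+1) J = gen_group (2*n+2) (oe_gens (n+1) J)"
  unfolding EO_ideal_def double_add_one ..

lemma EO_rel_Suc: "EO_rel (n+1) J = normal_closure (2*n+2) (EO (n+1)) (EO_ideal (n+1) J)"
  unfolding EO_rel_def double_add_one ..

lemma EO_ideal_subset_GL: "EO_ideal (n+1) J \<subseteq> GL (2*n+2)"
  unfolding EO_ideal_Suc
  by (rule gen_group_least[OF is_subgroup_GL oe_gens_subset_GL[of "n+1", unfolded double_add_one]])

lemma EO_subset_GL: "EO (n+1) \<subseteq> GL (2*n+2)"
  using EO_ideal_subset_GL[of n UNIV] by (simp add: EO_def EO_ideal_def)

lemma oe_commutator:
  assumes "i < 2*m" "j < 2*m" "i \<noteq> j" "i \<noteq> sigma j" "2 \<le> i" "2 \<le> j"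
  shows "mmult (2*m) (mmult (2*m) (mmult (2*m) (oe m i 0 a) (oe m 0 j b)) (oe m i 0 (-a))) (oe m 0 j (-b))
     = oe m i j (a * b)"
proof -
  have "2 \<le> sigma i" "2 \<le> sigma j"
    using assms by (simp_all add: sigma_ge_2)
  then have facts: "i < 2*m" "j < 2*m" "0 < 2*m" "Suc 0 < 2*m" "sigma i < 2*m" "sigma j < 2*m"
    "i \<noteq> 0" "i \<noteq> 1" "j \<noteq> 0" "j \<noteq> 1" "sigma i \<noteq> 0" "sigma i \<noteq> 1" "sigma j \<noteq> 0" "sigma j \<noteq> 1"
    "i \<noteq> j" "i \<noteq> sigma j"
    using assms by auto
  have facts': "i \<noteq> sigma i" "j \<noteq> sigma j" "j \<noteq> sigma i" "sigma i \<noteq> sigma j"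
    using assms(3,4) by (metis sigma_neq, metis sigma_neq, metis sigma_eq_iff, metis sigma_sigma)
  define P1 where "P1 = (\<lambda>r s. one_mat (2*m) r s
     + (if r = i \<and> s = 0 then a else 0) - (if r = 1 \<and> s = sigma i then a else 0)
     + (if r = 0 \<and> s = j then b else 0) - (if r = sigma j \<and> s = 1 then b else 0)
     + (if r = i \<and> s = j then a * b else 0))"
  define P2 where "P2 = (\<lambda>r s. one_mat (2*m) r s
     + (if r = 0 \<and> s = j then b else 0) - (if r = sigma j \<and> s = 1 then b else 0)
     + (if r = i \<and> s = j then a * b else 0) - (if r = sigma j \<and> s = sigma i then a * b else 0))"
  have "mmult (2*m) (oe m i 0 a) (oe m 0 j b) = P1"
  proof (intro ext)
    fix r s
    show "mmult (2*m) (oe m i 0 a) (oe m 0 j b) r s = P1 r s"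
      unfolding mmult_oe_right[OF facts(3,2)] P1_def oe_apply one_mat_def
      using facts facts'
      by (cases rule: index_cases5[where x=r and a=i and b=0 and c=1 and d="sigma j"];
          cases rule: index_cases5[where x=s and a=0 and b=1 and c=j and d="sigma i"]) simp_all
  qed
  moreover have "mmult (2*m) P1 (oe m i 0 (-a)) = P2"
  proof (intro ext)
    fix r s
    show "mmult (2*m) P1 (oe m i 0 (-a)) r s = P2 r s"
      unfolding mmult_oe_right[OF facts(1,3)] P1_def P2_def oe_apply one_mat_def
      using facts facts'
      by (cases rule: index_cases5[where x=r and a=i and b=0 and c=1 and d="sigma j"];
          cases rule: index_cases5[where x=s and a=0 and b=1 and c=j and d="sigma i"]) simp_all
  qed
  moreover have "mmult (2*m) P2 (oe m 0 j (-b)) = oe m i j (a * b)"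
  proof (intro ext)
    fix r s
    show "mmult (2*m) P2 (oe m 0 j (-b)) r s = oe m i j (a * b) r s"
      unfolding mmult_oe_right[OF facts(3,2)] P2_def oe_apply one_mat_def
      using facts facts'
      by (cases rule: index_cases5[where x=r and a=i and b=0 and c=1 and d="sigma j"];
          cases rule: index_cases5[where x=s and a=0 and b=1 and c=j and d="sigma i"]) simp_all
  qed
  ultimately show ?thesis
    by simp
qed

section \<open>Transvections of the hyperbolic plane\<close>

text \<open>The matrices E_a(q, c) of the introduction: rho and mu are the case c = 0, and the corner
  entry c at (sigma a, a) makes the family closed under multiplication.\<close>
definition transvection :: "nat \<Rightarrow> nat \<Rightarrow> (nat \<Rightarrow> 'a::comm_ring_1) \<Rightarrow> 'a \<Rightarrow> 'a sqmat" where
  "transvection n a q c = (\<lambda>i j. if i < 2*n+2 \<and> j < 2*n+2 then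
     (if i = j then 1
      else if i = sigma a \<and> 2 \<le> j then q (sigma (j - 2))
      else if 2 \<le> i \<and> j = a then - q (i - 2)
      else if i = sigma a \<and> j = a then c
      else 0)
   else 0)"

definition psi_form :: "nat \<Rightarrow> (nat \<Rightarrow> 'a::comm_ring_1) \<Rightarrow> (nat \<Rightarrow> 'a) \<Rightarrow> 'a" where
  "psi_form n q q' = (\<Sum>l<2*n. q (sigma l) * q' l)"

lemma qtphi_psi_t: "qtphi n (psi_t n) q l = (if l < 2*n then q (sigma l) else 0)"
proof -
  have "qtphi n (psi_t n) q l = (\<Sum>k<2*n. if k = sigma l then (if l < 2*n then q k else 0) else 0)"
    unfolding qtphi_def psi_t_def
    by (rule sum.cong) (auto simp: eq_sigma_iff[of l])
  then show ?thesis
    by simp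
qed

lemma isotropic_psi_t_iff: "isotropic n (psi_t n) q \<longleftrightarrow> psi_form n q q = 0"
proof -
  have "(\<Sum>l<2*n. qtphi n (psi_t n) q l * q l) = psi_form n q q"
    unfolding psi_form_def qtphi_psi_t by (rule sum.cong) auto
  then show ?thesis
    by (simp add: isotropic_def)
qed

lemma rho_psi_t: "rho n (psi_t n) q = transvection n 0 q 0"
  by (intro ext) (auto simp: rho_def transvection_def qtphi_psi_t)

lemma mu_psi_t: "mu n (psi_t n) q = transvection n 1 q 0"
  by (intro ext) (auto simp: mu_def transvection_def qtphi_psi_t)

lemma transvection_mult:
  assumes "a < 2"
  shows "mmult (2*n+2) (transvection n a q c) (transvection n a q' c')
       = transvection n a (\<lambda>k. q k + q' k) (c + c' - psi_form n q q')"
proof (intro ext)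
  fix i j
  have "a = 0 \<or> a = 1"
    using assms by auto
  show "mmult (2*n+2) (transvection n a q c) (transvection n a q' c') i j
      = transvection n a (\<lambda>k. q k + q' k) (c + c' - psi_form n q q') i j"
  proof (cases "i < 2*n+2 \<and> j < 2*n+2")
    case True
    then have "mmult (2*n+2) (transvection n a q c) (transvection n a q' c') i j
        = (\<Sum>k<Suc (Suc (2*n)). transvection n a q c i k * transvection n a q' c' k j)"
      by (simp add: mmult_def)
    also have "\<dots> = transvection n a (\<lambda>k. q k + q' k) (c + c' - psi_form n q q') i j"
      using True \<open>a = 0 \<or> a = 1\<close> unfolding sum_lessThan_Suc_Suc
      by (elim disjE; cases i rule: nat_cases_0_1_Suc_Suc; cases j rule: nat_cases_0_1_Suc_Suc)
        (auto simp: transvection_def psi_form_def sum_negf cong: if_cong)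
    finally show ?thesis .
  next
    case False
    then show ?thesis
      by (simp only: mmult_def transvection_def if_False)
  qed
qed

lemma oe_eq_transvection:
  assumes "a < 2" "l < 2*n"
  shows "oe (n+1) (Suc (Suc l)) a z = transvection n a (\<lambda>k. if k = l then - z else 0) 0"
proof (intro ext)
  fix r s
  have "a = 0 \<or> a = 1"
    using assms by auto
  then show "oe (n+1) (Suc (Suc l)) a z r s = transvection n a (\<lambda>k. if k = l then - z else 0) 0 r s"
    using assms(2)
    by (elim disjE; cases r rule: nat_cases_0_1_Suc_Suc; cases s rule: nat_cases_0_1_Suc_Suc)
      (auto simp: oe_def one_mat_def emat_def transvection_def sigma_eq_iff cong: if_cong)
qed

lemma transvection_cong:
  assumes "\<And>k. k < 2*n \<Longrightarrow> q k = q' k"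
  shows "transvection n a q c = transvection n a q' c"
proof (intro ext)
  fix i j
  have "q (sigma (j - 2)) = q' (sigma (j - 2))" if "j < 2*n+2" "2 \<le> j"
    using that by (intro assms) simp
  moreover have "q (i - 2) = q' (i - 2)" if "i < 2*n+2" "2 \<le> i"
    using that by (intro assms) simp
  ultimately show "transvection n a q c i j = transvection n a q' c i j"
    unfolding transvection_def by auto
qed

text \<open>The prefix sums half_psi_form k q are the corner entries that accumulate when the coordinate
  transvections of q are multiplied up.\<close>
definition half_psi_form :: "nat \<Rightarrow> (nat \<Rightarrow> 'a::comm_ring_1) \<Rightarrow> 'a" where
  "half_psi_form k q = (\<Sum>l<k. if odd l then q (l - 1) * q l else 0)"

lemma transvection_prefix_Suc:
  assumes "a < 2" "k < 2*n"
  shows "transvection n a (\<lambda>l. if l < Suc k then q l else 0) (- half_psi_form (Suc k) q)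
       = mmult (2*n+2) (transvection n a (\<lambda>l. if l < k then q l else 0) (- half_psi_form k q))
           (oe (n+1) (Suc (Suc k)) a (- q k))"
proof -
  let ?p = "\<lambda>l. if l < k then q l else 0" and ?e = "\<lambda>l. if l = k then q k else 0"
  have "psi_form n ?p ?e = ?p (sigma k) * q k"
    unfolding psi_form_def using assms(2) by (simp add: sum_lessThan_mult_delta)
  also have "\<dots> = (if odd k then q (k - 1) * q k else 0)"
    by (auto simp: sigma_def elim: oddE)
  finally have "- half_psi_form k q + 0 - psi_form n ?p ?e = - half_psi_form (Suc k) q"
    by (simp add: half_psi_form_def)
  moreover have "(\<lambda>l. ?p l + ?e l) = (\<lambda>l. if l < Suc k then q l else 0)"
    by (auto simp: fun_eq_iff)
  moreover have "transvection n a ?e 0 = oe (n+1) (Suc (Suc k)) a (- q k)"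
    unfolding oe_eq_transvection[OF assms] by simp
  ultimately show ?thesis
    using transvection_mult[OF assms(1), of n ?p "- half_psi_form k q" ?e 0] by simp
qed

lemma transvection_prefix_in_EO_ideal:
  assumes "a < 2" and J: "\<And>k. k < 2*n \<Longrightarrow> - q k \<in> J" and "k \<le> 2*n"
  shows "transvection n a (\<lambda>l. if l < k then q l else 0) (- half_psi_form k q) \<in> EO_ideal (n+1) J"
  using \<open>k \<le> 2*n\<close>
proof (induction k)
  case 0
  have "transvection n a (\<lambda>l. if l < 0 then q l else 0) (- half_psi_form 0 q) = one_mat (2*n+2)"
    by (intro ext) (simp add: transvection_def one_mat_def half_psi_form_def)
  then show ?case
    unfolding EO_ideal_Suc by (simp add: gen_one)
next
  case (Suc k)
  then have k: "k < 2*n"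
    by simp
  have "oe (n+1) (Suc (Suc k)) a (- q k) \<in> oe_gens (n+1) J"
    using assms(1) k J[OF k] unfolding oe_gens_def
    by (intro CollectI exI[of _ "Suc (Suc k)"] exI[of _ a] exI[of _ "- q k"]) (auto simp: sigma_def)
  with Suc.IH k show ?case
    unfolding transvection_prefix_Suc[OF assms(1) k] EO_ideal_Suc by (simp add: gen_mult gen_base)
qed

lemma psi_form_self: "psi_form n q q = 2 * half_psi_form (2*n) q"
proof -
  have pairs: "(\<Sum>l<2*n. f l) = (\<Sum>i<n. f (2*i) + f (2*i+1))" for f :: "nat \<Rightarrow> 'a"
    by (induction n) (auto simp: add.assoc)
  show ?thesis
    unfolding psi_form_def half_psi_form_def pairs
    by (simp add: sigma_def sum_distrib_left algebra_simps)
qed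

lemma isotropic_transvection_in_EO_ideal:
  fixes q :: "nat \<Rightarrow> 'a::comm_ring_1"
  assumes two: "\<forall>r::'a. \<exists>s. r = 2 * s" and iso: "psi_form n q q = 0"
    and "a < 2" and J: "\<And>k. k < 2*n \<Longrightarrow> - q k \<in> J"
  shows "transvection n a q 0 \<in> EO_ideal (n+1) J"
proof -
  obtain s :: 'a where s: "1 = 2 * s"
    using two by blast
  have "half_psi_form (2*n) q = (2 * s) * half_psi_form (2*n) q"
    by (simp flip: s)
  also have "\<dots> = s * psi_form n q q"
    by (simp add: psi_form_self)
  finally have "half_psi_form (2*n) q = 0"
    using iso by simp
  moreover have "transvection n a (\<lambda>l. if l < 2*n then q l else 0) (- half_psi_form (2*n) q)
      \<in> EO_ideal (n+1) J"
    using transvection_prefix_in_EO_ideal[where k="2*n", OF \<open>a < 2\<close> J order.refl] .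
  moreover have "transvection n a (\<lambda>l. if l < 2*n then q l else 0) 0 = transvection n a q 0"
    by (rule transvection_cong) simp
  ultimately show ?thesis
    by simp
qed

section \<open>Comparing the generators\<close>

lemma etrans_gens_subset_EO_ideal:
  fixes J :: "'a::comm_ring_1 set"
  assumes two: "\<forall>r::'a. \<exists>s. r = 2 * s" and J: "\<forall>x\<in>J. - x \<in> J"
  shows "etrans_gens n (psi_t n) J \<subseteq> EO_ideal (n+1) J"
proof
  fix M assume "M \<in> etrans_gens n (psi_t n) J"
  then obtain q where q: "\<forall>k<2*n. q k \<in> J" "psi_form n q q = 0"
    and M: "M = transvection n 0 q 0 \<or> M = transvection n 1 q 0"
    unfolding etrans_gens_def isotropic_psi_t_iff rho_psi_t mu_psi_t by blast
  have "\<And>k. k < 2*n \<Longrightarrow> - q k \<in> J"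
    using q(1) J by blast
  with M show "M \<in> EO_ideal (n+1) J"
    using isotropic_transvection_in_EO_ideal[OF two q(2)] by auto
qed

lemma etrans_gens_subset_GL:
  assumes "\<forall>r::'a::comm_ring_1. \<exists>s. r = 2 * s"
  shows "etrans_gens n (psi_t n) J \<subseteq> (GL (2*n+2) :: 'a sqmat set)"
proof -
  have "etrans_gens n (psi_t n) J \<subseteq> etrans_gens n (psi_t n) UNIV"
    unfolding etrans_gens_def by blast
  also have "\<dots> \<subseteq> EO_ideal (n+1) UNIV"
    using etrans_gens_subset_EO_ideal[OF assms] by blast
  also have "\<dots> \<subseteq> GL (2*n+2)"
    by (rule EO_ideal_subset_GL)
  finally show ?thesis .
qed

lemma coordinate_oe_in_etrans_gens:
  assumes "k < 2*n" "a < 2" "0 \<in> J" "- w \<in> J"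
  shows "oe (n+1) (Suc (Suc k)) a w \<in> etrans_gens n (psi_t n) J"
proof -
  define q where "q = (\<lambda>l. if l = k then - w else 0)"
  have "oe (n+1) (Suc (Suc k)) a w = transvection n a q 0"
    unfolding q_def by (rule oe_eq_transvection[OF assms(2,1)])
  moreover have "a = 0 \<or> a = 1"
    using assms(2) by auto
  ultimately have "oe (n+1) (Suc (Suc k)) a w = rho n (psi_t n) q \<or>
      oe (n+1) (Suc (Suc k)) a w = mu n (psi_t n) q"
    by (auto simp: rho_psi_t mu_psi_t)
  moreover have "psi_form n q q = 0"
    unfolding q_def psi_form_def using assms(1) by (simp add: sum_lessThan_mult_delta)
  moreover have "\<forall>l<2*n. q l \<in> J"
    using assms(3,4) by (simp add: q_def)
  ultimately show ?thesis
    unfolding etrans_gens_def isotropic_psi_t_iff by blast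
qed

lemma oe_in_etrans_gens:
  assumes J: "0 \<in> J" "\<forall>x\<in>J. - x \<in> J" and z: "z \<in> J"
    and ij: "i < 2*n+2" "j < 2*n+2" "i \<noteq> j" "i \<noteq> sigma j" and small: "i < 2 \<or> j < 2"
  shows "oe (n+1) i j z \<in> etrans_gens n (psi_t n) J"
proof (cases "j < 2")
  case True
  then obtain k where k: "i = Suc (Suc k)" "k < 2*n"
    using ij by (cases i rule: nat_cases_0_1_Suc_Suc) (auto simp: less_2_cases_iff)
  show ?thesis
    unfolding k(1) using k(2) True J z by (intro coordinate_oe_in_etrans_gens) auto
next
  case False
  moreover have "sigma j < 2*n+2"
    using ij(2) sigma_less_iff[of j "n+1"] by simp
  ultimately obtain k where k: "sigma j = Suc (Suc k)" "k < 2*n"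
    using sigma_ge_2[of j] by (cases "sigma j" rule: nat_cases_0_1_Suc_Suc) auto
  have "sigma i < 2"
    using False small by (auto simp: sigma_def)
  then have "oe (n+1) (sigma j) (sigma i) (- z) \<in> etrans_gens n (psi_t n) J"
    unfolding k(1) using k(2) J z by (intro coordinate_oe_in_etrans_gens) auto
  then show ?thesis
    by (simp only: oe_swap[of "n+1" i j z])
qed

text \<open>The hypotheses on H are what the commutator formula oe_{ij}(z) = [oe_{i0}(1), oe_{0j}(z)]
  needs when i, j \<ge> 2.\<close>
lemma oe_gens_subset_subgroup:
  fixes J :: "'a::comm_ring_1 set"
  assumes J: "0 \<in> J" "\<forall>x\<in>J. - x \<in> J"
    and H: "is_subgroup (2*n+2) H" "etrans_gens n (psi_t n) J \<subseteq> H"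
    and conj: "\<And>g h g'. g \<in> etrans_gens n (psi_t n) UNIV \<Longrightarrow> h \<in> etrans_gens n (psi_t n) J
         \<Longrightarrow> is_inv (2*n+2) g g' \<Longrightarrow> mmult (2*n+2) (mmult (2*n+2) g h) g' \<in> H"
  shows "oe_gens (n+1) J \<subseteq> H"
proof
  fix M assume "M \<in> oe_gens (n+1) J"
  then obtain i j z where M: "M = oe (n+1) i j z" "z \<in> J"
    and ij: "i < 2*n+2" "j < 2*n+2" "i \<noteq> j" "i \<noteq> sigma j"
    by (auto simp: oe_gens_def)
  show "M \<in> H"
  proof (cases "i < 2 \<or> j < 2")
    case True
    then show ?thesis
      using oe_in_etrans_gens[OF J M(2) ij] M(1) H(2) by blast
  next
    case False
    have "sigma j \<noteq> 0"
      using False sigma_ge_2[of j] by simp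
    have g: "oe (n+1) i 0 1 \<in> etrans_gens n (psi_t n) UNIV"
      using ij(1) False by (intro oe_in_etrans_gens) auto
    have h: "oe (n+1) 0 j w \<in> etrans_gens n (psi_t n) J" if "w \<in> J" for w
      using ij(2) False \<open>sigma j \<noteq> 0\<close> that J by (intro oe_in_etrans_gens) auto
    have "is_inv (2*n+2) (oe (n+1) i 0 1) (oe (n+1) i 0 (-1))"
      using is_inv_oe[of i "n+1" 0, unfolded double_add_one] ij(1) False by simp
    then have "mmult (2*n+2) (mmult (2*n+2) (oe (n+1) i 0 1) (oe (n+1) 0 j z)) (oe (n+1) i 0 (-1)) \<in> H"
      using conj g h M(2) by blast
    moreover have "oe (n+1) 0 j (-z) \<in> H"
      using h M(2) J(2) H(2) by blast
    moreover have "M = mmult (2*n+2) (mmult (2*n+2) (mmult (2*n+2) (oe (n+1) i 0 1) (oe (n+1) 0 j z))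
        (oe (n+1) i 0 (-1))) (oe (n+1) 0 j (-z))"
      using oe_commutator[of i "n+1" j 1 z, unfolded double_add_one] ij False M(1) by simp
    ultimately show ?thesis
      using H(1) unfolding is_subgroup_def by blast
  qed
qed

lemma ETrans_psi_t_eq_EO:
  assumes two: "\<forall>r::'a::comm_ring_1. \<exists>s. r = 2 * s"
  shows "ETrans n (psi_t n) = (EO (n+1) :: 'a sqmat set)"
proof
  show "ETrans n (psi_t n) \<subseteq> (EO (n+1) :: 'a sqmat set)"
    unfolding ETrans_def EO_Suc
    using etrans_gens_subset_EO_ideal[OF two, of UNIV, unfolded EO_ideal_Suc]
    by (intro gen_group_least is_subgroup_gen_group) simp
next
  have sub: "is_subgroup (2*n+2) (ETrans n (psi_t n) :: 'a sqmat set)"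
    unfolding ETrans_def by (rule is_subgroup_gen_group)
  have gens: "etrans_gens n (psi_t n) UNIV \<subseteq> (ETrans n (psi_t n) :: 'a sqmat set)"
    unfolding ETrans_def by (auto intro: gen_base)
  have "oe_gens (n+1) UNIV \<subseteq> (ETrans n (psi_t n) :: 'a sqmat set)"
    using sub gens unfolding is_subgroup_def
    by (intro oe_gens_subset_subgroup[OF _ _ sub gens]) blast+
  then show "(EO (n+1) :: 'a sqmat set) \<subseteq> ETrans n (psi_t n)"
    unfolding EO_Suc by (rule gen_group_least[OF sub])
qed

lemma ETrans_ideal_subset_EO_ideal:
  fixes J :: "'a::comm_ring_1 set"
  assumes "\<forall>r::'a. \<exists>s. r = 2 * s" "\<forall>x\<in>J. - x \<in> J"
  shows "ETrans_ideal n (psi_t n) J \<subseteq> EO_ideal (n+1) J"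
  unfolding ETrans_ideal_def EO_ideal_Suc
  using etrans_gens_subset_EO_ideal[OF assms, of n, unfolded EO_ideal_Suc]
  by (intro gen_group_least is_subgroup_gen_group)

lemma EO_ideal_subset_ETrans_rel:
  fixes J :: "'a::comm_ring_1 set" and n :: nat
  assumes two: "\<forall>r::'a. \<exists>s. r = 2 * s" and J: "0 \<in> J" "\<forall>x\<in>J. - x \<in> J"
  shows "EO_ideal (n+1) J \<subseteq> ETrans_rel n (psi_t n) J"
proof -
  let ?R = "ETrans_rel n (psi_t n) J"
  have sub: "is_subgroup (2*n+2) ?R"
    unfolding ETrans_rel_def normal_closure_def by (rule is_subgroup_gen_group)
  have "ETrans_ideal n (psi_t n) J \<subseteq> GL (2*n+2)"
    unfolding ETrans_ideal_def
    by (intro gen_group_least is_subgroup_GL etrans_gens_subset_GL[OF two])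
  then have "ETrans_ideal n (psi_t n) J \<subseteq> ?R"
    unfolding ETrans_rel_def ETrans_def by (intro subset_normal_closure gen_one)
  then have gens: "etrans_gens n (psi_t n) J \<subseteq> ?R"
    unfolding ETrans_ideal_def by (auto intro: gen_base)
  have "oe_gens (n+1) J \<subseteq> ?R"
  proof (rule oe_gens_subset_subgroup[OF J sub gens])
    fix g h g' :: "'a sqmat"
    assume "g \<in> etrans_gens n (psi_t n) UNIV" "h \<in> etrans_gens n (psi_t n) J"
      "is_inv (2*n+2) g g'"
    then show "mmult (2*n+2) (mmult (2*n+2) g h) g' \<in> ?R"
      unfolding ETrans_rel_def ETrans_def ETrans_ideal_def normal_closure_def
      by (blast intro: gen_base)
  qed
  then show ?thesis
    unfolding EO_ideal_Suc by (rule gen_group_least[OF sub])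
qed

theorem mainTheorem9:
  fixes I :: "'a::comm_ring_1 set" and n :: nat
  assumes "\<forall>r::'a. \<exists>s. r = 2 * s"
    and "is_ideal I"
    and "2 \<le> n"
  shows "ETrans_rel n (psi_t n) I = EO_rel (n + 1) I"
proof -
  let ?E = "EO (n+1) :: 'a sqmat set"
  have I: "0 \<in> I" "\<forall>x\<in>I. - x \<in> I"
    using assms(2) unfolding is_ideal_def by (simp, metis mult_minus1)
  have E: "is_subgroup (2*n+2) ?E" "?E \<subseteq> GL (2*n+2)"
    unfolding EO_Suc by (rule is_subgroup_gen_group) (rule EO_subset_GL[unfolded EO_Suc])
  have rel: "ETrans_rel n (psi_t n) I = normal_closure (2*n+2) ?E (ETrans_ideal n (psi_t n) I)"
    unfolding ETrans_rel_def ETrans_psi_t_eq_EO[OF assms(1)] ..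
  have ideals: "ETrans_ideal n (psi_t n) I \<subseteq> EO_ideal (n+1) I"
    by (rule ETrans_ideal_subset_EO_ideal[OF assms(1) I(2)])
  have "EO_ideal (n+1) I \<subseteq> EO_rel (n+1) I"
    unfolding EO_rel_Suc EO_Suc by (intro subset_normal_closure gen_one EO_ideal_subset_GL)
  then have "ETrans_rel n (psi_t n) I \<subseteq> EO_rel (n+1) I"
    using ideals unfolding rel EO_rel_Suc
    by (intro normal_closure_subsetI[OF E EO_ideal_subset_GL]) blast
  moreover have "EO_rel (n+1) I \<subseteq> ETrans_rel n (psi_t n) I"
  proof -
    have "ETrans_ideal n (psi_t n) I \<subseteq> GL (2*n+2)"
      using ideals EO_ideal_subset_GL by blast
    moreover have "EO_ideal (n+1) I \<subseteq> normal_closure (2*n+2) ?E (ETrans_ideal n (psi_t n) I)"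
      using EO_ideal_subset_ETrans_rel[OF assms(1) I, of n] unfolding rel .
    ultimately show ?thesis
      unfolding rel EO_rel_Suc by (rule normal_closure_subsetI[OF E])
  qed
  ultimately show ?thesis
    by (rule antisym)
qed

end
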